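(* Let $\alpha\in[0,1)$, let $n\geq f(\alpha)$, and let $s$ be an integer with $2\leq s\leq\frac{n-2}{3}$. Then $\rho_{\alpha}\big(K_s\vee(K_{n-3s}\cup 2sK_1)\big)<\eta(n)$. (For $s=1$ one has $\rho_{\alpha}(K_1\vee(K_{n-3}\cup 2K_1))=\eta(n)$.)
   Context: For a graph $G$, $A_{\alpha}(G)=\alpha D(G)+(1-\alpha)A(G)$ where $D(G)$ is the diagonal degree matrix and $A(G)$ the adjacency matrix, and $\rho_{\alpha}(G)$ is the largest eigenvalue of $A_{\alpha}(G)$. $\vee$ denotes join, $\cup$ disjoint union, $K_m$ the complete graph on $m$ vertices, $tK_1$ the edgeless graph on $t$ vertices. Define $f(\alpha)=14$ if $\alpha\in[0,\frac12]$, $f(\alpha)=17$ if $\alpha\in(\frac12,\frac23]$, $f(\alpha)=20$ if $\alpha\in(\frac23,\frac34]$, and $f(\alpha)=\frac{5}{1-\alpha}+1$ if $\alpha\in(\frac34,1)$. $\eta(n)$ is the largest root of $x^{3}-((\alpha+1)n+\alpha-4)x^{2}+(\alpha n^{2}+(\alpha^{2}-2\alpha-1)n-2\alpha+1)x-\alpha^{2}n^{2}+(5\alpha^{2}-3\alpha+2)n-10\alpha^{2}+15\alpha-8=0$. *)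

theory Defs
  imports "Jordan_Normal_Form.Char_Poly"
begin

text \<open>A (simple) graph on the vertex set {0..<n}, given by its order and a symmetric,
  irreflexive adjacency predicate (only its values on {0..<n} matter).\<close>
type_synonym graph = "nat \<times> (nat \<Rightarrow> nat \<Rightarrow> bool)"

definition complete_graph :: "nat \<Rightarrow> graph" where
  "complete_graph m = (m, \<lambda>i j. i \<noteq> j)"

definition edgeless_graph :: "nat \<Rightarrow> graph" where
  "edgeless_graph t = (t, \<lambda>i j. False)"

definition graph_union :: "graph \<Rightarrow> graph \<Rightarrow> graph" where
  "graph_union G H = (fst G + fst H, \<lambda>i j.
     if i < fst G \<and> j < fst G then snd G i j
     else if fst G \<le> i \<and> fst G \<le> j then snd H (i - fst G) (j - fst G)
     else False)"

definition graph_join :: "graph \<Rightarrow> graph \<Rightarrow> graph" where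
  "graph_join G H = (fst G + fst H, \<lambda>i j.
     if i < fst G \<and> j < fst G then snd G i j
     else if fst G \<le> i \<and> fst G \<le> j then snd H (i - fst G) (j - fst G)
     else True)"

definition degree :: "graph \<Rightarrow> nat \<Rightarrow> nat" where
  "degree G i = card {j. j < fst G \<and> snd G i j}"

definition A_alpha :: "real \<Rightarrow> graph \<Rightarrow> real mat" where
  "A_alpha \<alpha> G = mat (fst G) (fst G) (\<lambda>(i, j).
     \<alpha> * (if i = j then real (degree G i) else 0)
     + (1 - \<alpha>) * (if snd G i j then 1 else 0))"

definition rho_alpha :: "real \<Rightarrow> graph \<Rightarrow> real" where
  "rho_alpha \<alpha> G = Max {x. eigenvalue (A_alpha \<alpha> G) x}"

definition f_bound :: "real \<Rightarrow> real" where
  "f_bound \<alpha> = (if \<alpha> \<le> 1/2 then 14 else if \<alpha> \<le> 2/3 then 17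
                  else if \<alpha> \<le> 3/4 then 20 else 5 / (1 - \<alpha>) + 1)"

definition eta_poly :: "real \<Rightarrow> nat \<Rightarrow> real \<Rightarrow> real" where
  "eta_poly \<alpha> n x = x ^ 3 - ((\<alpha> + 1) * real n + \<alpha> - 4) * x ^ 2
     + (\<alpha> * (real n)^2 + (\<alpha>^2 - 2*\<alpha> - 1) * real n - 2*\<alpha> + 1) * x
     - \<alpha>^2 * (real n)^2 + (5*\<alpha>^2 - 3*\<alpha> + 2) * real n - 10*\<alpha>^2 + 15*\<alpha> - 8"

definition eta :: "real \<Rightarrow> nat \<Rightarrow> real" where
  "eta \<alpha> n = Max {x. eta_poly \<alpha> n x = 0}"

end

theory Submission
  imports Defs
begin

text \<open>The graph \<open>K\<^sub>s \<or> (K\<^sub>m \<union> 2sK\<^sub>1)\<close>, with \<open>m = n - 3s\<close>, carries a positive vector that is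
  constant on its three parts and satisfies \<open>A\<^sub>\<alpha> u \<le> (n - 3) u\<close> row by row as soon as
  \<open>(1 - \<alpha>) n \<ge> 5\<close>, which is what \<open>n \<ge> f(\<alpha>)\<close> provides. By the Collatz--Wielandt argument every
  eigenvalue of the nonnegative matrix \<open>A\<^sub>\<alpha>\<close> is then at most \<open>n - 3\<close>. On the other side, the
  cubic defining \<open>\<eta>(n)\<close> is negative at \<open>n - 3\<close> and positive at \<open>n - 1\<close>, so \<open>\<eta>(n) > n - 3\<close>.\<close>

lemma five_le_f_bound:
  assumes "a < 1" shows "5 \<le> (1 - a) * f_bound a"
proof -
  have "(1 - a) * (5 / (1 - a) + 1) = 6 - a" using assms by (simp add: field_simps)
  then show ?thesis using assms by (auto simp: f_bound_def)
qed

lemma abs_eigenvalue_le_of_row_bound: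
  fixes A :: "real mat" and u :: "nat \<Rightarrow> real"
  assumes A: "A \<in> carrier_mat N N"
    and nonneg: "\<And>i j. i < N \<Longrightarrow> j < N \<Longrightarrow> 0 \<le> A $$ (i, j)"
    and pos: "\<And>i. i < N \<Longrightarrow> 0 < u i"
    and row: "\<And>i. i < N \<Longrightarrow> (\<Sum>j<N. A $$ (i, j) * u j) \<le> c * u i"
    and "eigenvalue A k"
  shows "\<bar>k\<bar> \<le> c"
proof -
  obtain v where v: "v \<in> carrier_vec N" "v \<noteq> 0\<^sub>v N" "A *\<^sub>v v = k \<cdot>\<^sub>v v"
    using \<open>eigenvalue A k\<close> A unfolding eigenvalue_def eigenvector_def by auto
  obtain j0 where j0: "j0 < N" "v $ j0 \<noteq> 0"
    using v(1,2) by (metis carrier_vecD eq_vecI index_zero_vec)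
  define r where "r j = \<bar>v $ j\<bar> / u j" for j
  obtain i where i: "i < N" and r_max: "\<And>j. j < N \<Longrightarrow> r j \<le> r i"
    using Max_in[of "r ` {..<N}"] Max_ge[of "r ` {..<N}"] j0(1)
    by (metis empty_iff finite_imageI finite_lessThan image_eqI imageE lessThan_iff)
  have "0 < r j0" using j0 pos[of j0] by (simp add: r_def)
  with r_max[OF j0(1)] have ri: "0 < r i" by linarith
  have v_le: "\<bar>v $ j\<bar> \<le> r i * u j" if "j < N" for j
    using r_max[OF that] pos[OF that] by (simp add: r_def pos_divide_le_eq)
  have eigen_row: "k * v $ i = (\<Sum>j<N. A $$ (i, j) * v $ j)"
    using arg_cong[OF v(3), of "\<lambda>x. x $ i"] A v(1) i
    by (auto simp: scalar_prod_def atLeast0LessThan)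
  have "\<bar>k\<bar> * (r i * u i) = \<bar>k * v $ i\<bar>"
    using pos[OF i] by (simp add: r_def abs_mult)
  also have "\<dots> \<le> (\<Sum>j<N. \<bar>A $$ (i, j) * v $ j\<bar>)"
    unfolding eigen_row by (rule sum_abs)
  also have "\<dots> \<le> (\<Sum>j<N. A $$ (i, j) * (r i * u j))"
    by (intro sum_mono) (use nonneg i v_le in \<open>auto simp: abs_mult intro: mult_left_mono\<close>)
  also have "\<dots> = r i * (\<Sum>j<N. A $$ (i, j) * u j)"
    by (simp add: sum_distrib_left algebra_simps)
  also have "\<dots> \<le> c * (r i * u i)"
    using row[OF i] ri by (simp add: algebra_simps)
  finally show ?thesis
    using ri pos[OF i] by (simp add: mult_le_cancel_right_pos)
qed

lemma A_alpha_carrier: "A_alpha a G \<in> carrier_mat (fst G) (fst G)"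
  by (simp add: A_alpha_def)

lemma A_alpha_index:
  "i < fst G \<Longrightarrow> j < fst G \<Longrightarrow> A_alpha a G $$ (i, j) =
     a * (if i = j then real (degree G i) else 0) + (1 - a) * (if snd G i j then 1 else 0)"
  by (simp add: A_alpha_def)

lemma A_alpha_nonneg:
  "0 \<le> a \<Longrightarrow> a \<le> 1 \<Longrightarrow> i < fst G \<Longrightarrow> j < fst G \<Longrightarrow> 0 \<le> A_alpha a G $$ (i, j)"
  by (simp add: A_alpha_index)

lemma A_alpha_row_sum:
  assumes "i < fst G"
  shows "(\<Sum>j<fst G. A_alpha a G $$ (i, j) * u j) =
    a * real (degree G i) * u i + (1 - a) * sum u {j. j < fst G \<and> snd G i j}"
proof -
  have "(\<Sum>j<fst G. A_alpha a G $$ (i, j) * u j) =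
      (\<Sum>j<fst G. (if j = i then a * real (degree G i) * u j else 0)
                  + (1 - a) * (if snd G i j then u j else 0))"
    by (intro sum.cong) (use assms in \<open>auto simp: A_alpha_index algebra_simps\<close>)
  also have "\<dots> = a * real (degree G i) * u i + (1 - a) * sum u {j. j < fst G \<and> snd G i j}"
    using assms by (simp add: sum.distrib flip: sum_distrib_left sum.inter_filter)
  finally show ?thesis .
qed

text \<open>Non-adjacent twins \<open>p, q\<close> give the eigenvector \<open>e\<^sub>p - e\<^sub>q\<close>. Over the reals this is how the
  set whose \<open>Max\<close> defines \<open>rho_alpha\<close> is shown to be non-empty.\<close>
lemma eigenvalue_A_alpha_twins:
  assumes pq: "p < fst G" "q < fst G" "p \<noteq> q"
    and row_twin: "\<And>j. j < fst G \<Longrightarrow> snd G p j = snd G q j"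
    and col_twin: "\<And>i. i < fst G \<Longrightarrow> snd G i p = snd G i q"
    and "\<not> snd G p q"
  shows "eigenvalue (A_alpha a G) (a * real (degree G p))"
proof -
  let ?N = "fst G" and ?A = "A_alpha a G" and ?k = "a * real (degree G p)"
  define v where "v = vec ?N (\<lambda>j. (if j = p then 1 else 0) - (if j = q then 1 else 0 :: real))"
  have no_loops: "\<not> snd G p p" "\<not> snd G q q" "\<not> snd G q p"
    using row_twin[of p] row_twin[of q] col_twin[of p] \<open>\<not> snd G p q\<close> pq by auto
  have deg: "degree G q = degree G p"
    using row_twin by (simp add: degree_def conj_commute cong: conj_cong)
  have v: "v \<in> carrier_vec ?N" "v \<noteq> 0\<^sub>v ?N"
    using pq by (auto simp: v_def dest!: arg_cong[of _ _ "\<lambda>x. x $ p"])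
  have "?A *\<^sub>v v = ?k \<cdot>\<^sub>v v"
  proof (rule eq_vecI)
    fix i assume "i < dim_vec (?k \<cdot>\<^sub>v v)"
    then have i: "i < ?N" by (simp add: v_def)
    have "(?A *\<^sub>v v) $ i = (\<Sum>j<?N. ?A $$ (i, j) * v $ j)"
      using i A_alpha_carrier[of a G] by (simp add: v_def scalar_prod_def atLeast0LessThan)
    also have "\<dots> = ?A $$ (i, p) - ?A $$ (i, q)"
    proof -
      have "(\<Sum>j<?N. ?A $$ (i, j) * v $ j)
          = (\<Sum>j<?N. (if j = p then ?A $$ (i, j) else 0) - (if j = q then ?A $$ (i, j) else 0))"
        by (intro sum.cong) (auto simp: v_def)
      then show ?thesis using pq by (simp add: sum_subtractf)
    qed
    also have "\<dots> = ?k * v $ i"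
      using i pq no_loops deg col_twin[OF i] by (cases "i = p \<or> i = q") (auto simp: A_alpha_index v_def)
    finally show "(?A *\<^sub>v v) $ i = (?k \<cdot>\<^sub>v v) $ i" using i by (simp add: v_def)
  qed (simp add: v_def A_alpha_def)
  then show ?thesis
    using v A_alpha_carrier[of a G] unfolding eigenvalue_def eigenvector_def by (auto simp: A_alpha_def)
qed

lemma rho_alpha_le_of_row_bound:
  assumes "0 \<le> a" "a \<le> 1"
    and "\<exists>k. eigenvalue (A_alpha a G) k"
    and "\<And>i. i < fst G \<Longrightarrow> 0 < u i"
    and "\<And>i. i < fst G \<Longrightarrow> (\<Sum>j<fst G. A_alpha a G $$ (i, j) * u j) \<le> c * u i"
  shows "rho_alpha a G \<le> c"
proof -
  let ?A = "A_alpha a G"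
  have "char_poly ?A \<noteq> 0"
    using degree_monic_char_poly[OF A_alpha_carrier] by (metis coeff_0 zero_neq_one)
  then have "finite {k. eigenvalue ?A k}"
    by (simp add: eigenvalue_root_char_poly[OF A_alpha_carrier] poly_roots_finite)
  moreover have "k \<le> c" if "eigenvalue ?A k" for k
    using abs_eigenvalue_le_of_row_bound[OF A_alpha_carrier A_alpha_nonneg[OF assms(1,2)] assms(4,5) that]
    by (rule abs_le_D1)
  ultimately show ?thesis
    using assms(3) unfolding rho_alpha_def by (subst Max_le_iff) auto
qed

lemma eta_poly_at_n_minus_3:
  "eta_poly a n (real n - 3) = - 2 * (1 - a)^2 - 2 * a * (1 - a) * (real n - 4)"
  unfolding eta_poly_def by (simp add: algebra_simps power2_eq_square power3_eq_cube)

lemma eta_poly_at_n_minus_1: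
  "eta_poly a n (real n - 1) = (1 - a) * (2 * (real n)^2 - 2 * real n - 6 - (4 * real n - 10) * a)"
  unfolding eta_poly_def by (simp add: algebra_simps power2_eq_square power3_eq_cube)

lemma finite_eta_poly_roots: "finite {x. eta_poly a n x = 0}"
proof -
  let ?p = "pCons (- (a^2) * (real n)^2 + (5*a^2 - 3*a + 2) * real n - 10*a^2 + 15*a - 8)
             (pCons (a * (real n)^2 + (a^2 - 2*a - 1) * real n - 2*a + 1)
               (pCons (- ((a + 1) * real n + a - 4)) (pCons 1 0)))"
  have "eta_poly a n x = poly ?p x" for x
    by (simp add: eta_poly_def algebra_simps power2_eq_square power3_eq_cube)
  then show ?thesis using poly_roots_finite[of ?p] by simp
qed

lemma eta_gt_n_minus_3:
  assumes "0 \<le> a" "a < 1" "4 \<le> real n"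
  shows "real n - 3 < eta a n"
proof -
  have "0 < (1 - a)^2" "0 \<le> 2 * a * (1 - a) * (real n - 4)" using assms by auto
  then have neg: "eta_poly a n (real n - 3) < 0"
    unfolding eta_poly_at_n_minus_3 by linarith
  have "2 * (real n)^2 - 2 * real n - 6 - (4 * real n - 10) * a
      = 2 * (real n - 1) * (real n - 2) + (4 * real n - 10) * (1 - a)"
    by (simp add: algebra_simps power2_eq_square)
  also have "\<dots> > 0" using assms by (intro add_pos_nonneg) auto
  finally have "0 < eta_poly a n (real n - 1)"
    using assms by (simp add: eta_poly_at_n_minus_1)
  moreover have "continuous_on {real n - 3 .. real n - 1} (eta_poly a n)"
    unfolding eta_poly_def by (intro continuous_intros)
  ultimately obtain x where "real n - 3 \<le> x" "eta_poly a n x = 0"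
    using IVT'[of "eta_poly a n" "real n - 3" 0 "real n - 1"] neg by auto
  moreover from this neg have "x \<noteq> real n - 3" by auto
  moreover have "x \<le> eta a n"
    unfolding eta_def using finite_eta_poly_roots \<open>eta_poly a n x = 0\<close> by (intro Max_ge) auto
  ultimately show ?thesis by linarith
qed

definition clique_join_graph :: "nat \<Rightarrow> nat \<Rightarrow> nat \<Rightarrow> graph" where
  "clique_join_graph s m t =
     graph_join (complete_graph s) (graph_union (complete_graph m) (edgeless_graph t))"

lemma fst_clique_join_graph [simp]: "fst (clique_join_graph s m t) = s + m + t"
  by (simp add: clique_join_graph_def graph_join_def graph_union_def complete_graph_def
      edgeless_graph_def)

lemma snd_clique_join_graph:
  "snd (clique_join_graph s m t) i j \<longleftrightarrow> i \<noteq> j \<and> (i < s \<or> j < s \<or> i < s + m \<and> j < s + m)"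
  by (auto simp: clique_join_graph_def graph_join_def graph_union_def complete_graph_def
      edgeless_graph_def)

lemma neighbours_clique_join_graph:
  fixes s m t :: nat
  shows "i < s \<Longrightarrow>
      {j. j < s + m + t \<and> snd (clique_join_graph s m t) i j} = {..<s + m + t} - {i}"
    and "s \<le> i \<Longrightarrow> i < s + m \<Longrightarrow>
      {j. j < s + m + t \<and> snd (clique_join_graph s m t) i j} = {..<s + m} - {i}"
    and "s + m \<le> i \<Longrightarrow>
      {j. j < s + m + t \<and> snd (clique_join_graph s m t) i j} = {..<s}"
  by (auto simp: snd_clique_join_graph)

lemma degree_clique_join_graph:
  fixes s m t :: nat
  shows "i < s \<Longrightarrow> degree (clique_join_graph s m t) i = s + m + t - 1"
    and "s \<le> i \<Longrightarrow> i < s + m \<Longrightarrow> degree (clique_join_graph s m t) i = s + m - 1"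
    and "s + m \<le> i \<Longrightarrow> degree (clique_join_graph s m t) i = s"
  by (simp_all add: degree_def neighbours_clique_join_graph)

lemma eigenvalue_A_alpha_clique_join_graph:
  assumes "2 \<le> t"
  shows "eigenvalue (A_alpha a (clique_join_graph s m t)) (a * real s)"
proof -
  have "eigenvalue (A_alpha a (clique_join_graph s m t))
          (a * real (degree (clique_join_graph s m t) (s + m)))"
    using assms by (intro eigenvalue_A_alpha_twins[where q = "s + m + 1"])
      (auto simp: snd_clique_join_graph)
  then show ?thesis by (simp add: degree_clique_join_graph)
qed

text \<open>The slack of a row of the dominating clique \<open>K\<^sub>s\<close>, written in \<open>b = 1 - \<alpha>\<close>.\<close>
lemma clique_row_slack_nonneg:
  fixes b m s :: real
  assumes "0 < b" "b \<le> 1" and "2 \<le> s" "2 \<le> m" and large: "5 \<le> b * m + 3 * (b * s)"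
  shows "0 \<le> (1 - b) * (b * m) * (m + 2 * s - 3 + b * s) + m * (2 * (b * s) - 2)
              + 4 * (b * s - 1) * (s - 2) - 2"
    (is "0 \<le> ?F * ?L + m * (2 * ?t - 2) + 4 * (?t - 1) * (s - 2) - 2")
proof -
  have "2 * b \<le> ?t" "0 < ?t" using assms by simp_all
  then have "0 \<le> ?F" "3 \<le> ?L" using assms by (auto, linarith)
  consider "3 / 2 \<le> ?t" | "1 \<le> ?t" "?t < 3 / 2" | "?t < 1" by linarith
  then show ?thesis
  proof cases
    case 1
    have "2 \<le> 2 * (2 * ?t - 2)" using 1 by simp
    also have "\<dots> \<le> m * (2 * ?t - 2)" using 1 assms by (intro mult_right_mono) auto
    finally have "2 \<le> m * (2 * ?t - 2)" .
    moreover have "0 \<le> ?F * ?L" "0 \<le> 4 * (?t - 1) * (s - 2)"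
      using 1 \<open>0 \<le> ?F\<close> \<open>3 \<le> ?L\<close> assms by auto
    ultimately show ?thesis by linarith
  next
    case 2
    have "1 / 4 \<le> 1 - b" "4 \<le> ?L" using 2 \<open>2 * b \<le> ?t\<close> assms by linarith+
    then have "(1 / 4) * (5 - 3 * ?t) \<le> ?F"
      using 2 large by (intro mult_mono) auto
    then have "(1 / 4) * (5 - 3 * ?t) * 4 \<le> ?F * ?L"
      using \<open>4 \<le> ?L\<close> \<open>0 \<le> ?F\<close> by (rule mult_mono) auto
    then have "5 - 3 * ?t \<le> ?F * ?L" by simp
    moreover have "4 * ?t - 4 \<le> m * (2 * ?t - 2)"
    proof -
      have "4 * ?t - 4 = 2 * (2 * ?t - 2)" by simp
      also have "\<dots> \<le> m * (2 * ?t - 2)" using 2 assms by (intro mult_right_mono) auto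
      finally show ?thesis .
    qed
    moreover have "0 \<le> 4 * (?t - 1) * (s - 2)" using 2 assms by auto
    ultimately show ?thesis using 2 by linarith
  next
    case 3
    have "(1 / 2) * (5 - 3 * ?t) * ?L \<le> ?F * ?L"
      using 3 \<open>2 * b \<le> ?t\<close> large \<open>3 \<le> ?L\<close> by (intro mult_mono mult_right_mono) auto
    moreover have "(1 / 2) * (5 - 3 * ?t) * ?L + m * (2 * ?t - 2) + 4 * (?t - 1) * (s - 2) - 2
        = m * (1 + ?t) / 2 + (1 + ?t) * (s - 2) + (1 - ?t) * (1 + 3 * ?t) / 2"
      by (simp add: field_simps)
    moreover have "0 \<le> m * (1 + ?t)" "0 \<le> (1 + ?t) * (s - 2)" "0 \<le> (1 - ?t) * (1 + 3 * ?t)"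
      using 3 \<open>0 < ?t\<close> assms by auto
    ultimately show ?thesis by linarith
  qed
qed

definition clique_weight :: "real \<Rightarrow> nat \<Rightarrow> nat \<Rightarrow> real" where
  "clique_weight a s m = real m + 3 * real s - 3 - a * real s"

text \<open>With \<open>n = m + 3s\<close>, the ratios make the rows of the \<open>2s\<close> independent vertices tight.\<close>
definition clique_join_weight :: "real \<Rightarrow> nat \<Rightarrow> nat \<Rightarrow> nat \<Rightarrow> real" where
  "clique_join_weight a s m j =
     (if j < s then clique_weight a s m
      else if j < s + m then (1 - a) * clique_weight a s m else (1 - a) * real s)"

lemma clique_weight_pos:
  assumes "a < 1" "1 \<le> s" "2 \<le> m" shows "0 < clique_weight a s m"
proof -
  have "a * real s \<le> real s" using assms by (simp add: mult_left_le_one_le)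
  then show ?thesis using assms unfolding clique_weight_def by linarith
qed

lemma clique_join_weight_pos:
  "a < 1 \<Longrightarrow> 1 \<le> s \<Longrightarrow> 2 \<le> m \<Longrightarrow> 0 < clique_join_weight a s m j"
  using clique_weight_pos[of a s m] by (simp add: clique_join_weight_def)

lemma sum_clique_join_weight:
  fixes a :: real and s m :: nat
  defines "w \<equiv> clique_join_weight a s m" and "D \<equiv> clique_weight a s m"
  shows "sum w {..<s} = real s * D"
    and "sum w {..<s + m} = real s * D + real m * ((1 - a) * D)"
    and "sum w {..<s + m + 2 * s} =
      real s * D + real m * ((1 - a) * D) + real (2 * s) * ((1 - a) * real s)"
proof -
  have split: "sum w {..<l} = sum w {..<k} + sum w {k..<l}" if "k \<le> l" for k l
    using sum.atLeastLessThan_concat[of 0 k l w] that by (simp add: atLeast0LessThan)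
  show s: "sum w {..<s} = real s * D"
    by (simp add: w_def D_def clique_join_weight_def)
  have "sum w {s..<s + m} = real m * ((1 - a) * D)"
    by (simp add: w_def D_def clique_join_weight_def)
  with s split[of s "s + m"] show sm: "sum w {..<s + m} = real s * D + real m * ((1 - a) * D)"
    by simp
  have "sum w {s + m..<s + m + 2 * s} = real (2 * s) * ((1 - a) * real s)"
    by (simp add: w_def clique_join_weight_def)
  with sm split[of "s + m" "s + m + 2 * s"] show "sum w {..<s + m + 2 * s} =
      real s * D + real m * ((1 - a) * D) + real (2 * s) * ((1 - a) * real s)"
    by simp
qed

lemma A_alpha_clique_join_weight_row:
  fixes a :: real and s m i :: nat
  defines "G \<equiv> clique_join_graph s m (2 * s)" and "w \<equiv> clique_join_weight a s m"
    and "D \<equiv> clique_weight a s m"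
  shows "i < s \<Longrightarrow> (\<Sum>j<fst G. A_alpha a G $$ (i, j) * w j) =
      a * (real m + 3 * real s - 1) * D
      + (1 - a) * (real s * D + real m * ((1 - a) * D) + real (2 * s) * ((1 - a) * real s) - D)"
    and "s \<le> i \<Longrightarrow> i < s + m \<Longrightarrow> (\<Sum>j<fst G. A_alpha a G $$ (i, j) * w j) =
      a * (real m + real s - 1) * ((1 - a) * D)
      + (1 - a) * (real s * D + real m * ((1 - a) * D) - (1 - a) * D)"
    and "s + m \<le> i \<Longrightarrow> i < s + m + 2 * s \<Longrightarrow> (\<Sum>j<fst G. A_alpha a G $$ (i, j) * w j) =
      a * real s * ((1 - a) * real s) + (1 - a) * (real s * D)"
proof -
  have row: "(\<Sum>j<fst G. A_alpha a G $$ (i, j) * w j) =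
      a * real (degree G i) * w i + (1 - a) * sum w {j. j < s + m + 2 * s \<and> snd G i j}"
    if "i < s + m + 2 * s"
    using A_alpha_row_sum[of i G a w] that by (simp add: G_def)
  note sums = sum_clique_join_weight[of a s m, folded w_def D_def]
  have w: "w j = (if j < s then D else if j < s + m then (1 - a) * D else (1 - a) * real s)" for j
    by (simp add: w_def D_def clique_join_weight_def)
  show "(\<Sum>j<fst G. A_alpha a G $$ (i, j) * w j) =
      a * (real m + 3 * real s - 1) * D
      + (1 - a) * (real s * D + real m * ((1 - a) * D) + real (2 * s) * ((1 - a) * real s) - D)"
    if i: "i < s"
  proof -
    have "real (degree G i) = real m + 3 * real s - 1"
      using i by (simp add: G_def degree_clique_join_graph of_nat_diff)
    moreover have "sum w {j. j < s + m + 2 * s \<and> snd G i j} = sum w {..<s + m + 2 * s} - w i"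
      using i unfolding G_def neighbours_clique_join_graph(1)[OF i] by (simp add: sum_diff1)
    moreover have "w i = D" using i by (simp add: w)
    ultimately show ?thesis using i by (simp only: row sums(3))
  qed
  show "(\<Sum>j<fst G. A_alpha a G $$ (i, j) * w j) =
      a * (real m + real s - 1) * ((1 - a) * D)
      + (1 - a) * (real s * D + real m * ((1 - a) * D) - (1 - a) * D)"
    if i: "s \<le> i" "i < s + m"
  proof -
    have "real (degree G i) = real m + real s - 1"
      using i by (simp add: G_def degree_clique_join_graph of_nat_diff)
    moreover have "sum w {j. j < s + m + 2 * s \<and> snd G i j} = sum w {..<s + m} - w i"
      using i unfolding G_def neighbours_clique_join_graph(2)[OF i] by (simp add: sum_diff1)
    moreover have "w i = (1 - a) * D" using i by (simp add: w)
    ultimately show ?thesis using i by (simp only: row sums(2) trans_less_add1)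
  qed
  show "(\<Sum>j<fst G. A_alpha a G $$ (i, j) * w j) =
      a * real s * ((1 - a) * real s) + (1 - a) * (real s * D)"
    if i: "s + m \<le> i" "i < s + m + 2 * s"
  proof -
    have "degree G i = s"
      using i by (simp add: G_def degree_clique_join_graph)
    moreover have "sum w {j. j < s + m + 2 * s \<and> snd G i j} = real s * D"
      using sums(1) unfolding G_def neighbours_clique_join_graph(3)[OF i(1)] .
    moreover have "w i = (1 - a) * real s" using i by (simp add: w)
    ultimately show ?thesis using i by (simp only: row)
  qed
qed

lemma A_alpha_clique_join_row_bound:
  assumes a: "0 \<le> a" "a < 1" and "2 \<le> s" "2 \<le> m" and large: "5 \<le> (1 - a) * (real m + 3 * real s)"
    and i: "i < s + m + 2 * s"
  defines "G \<equiv> clique_join_graph s m (2 * s)" and "w \<equiv> clique_join_weight a s m"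
  shows "(\<Sum>j<fst G. A_alpha a G $$ (i, j) * w j) \<le> (real m + 3 * real s - 3) * w i"
proof -
  define D where "D = clique_weight a s m"
  note row = A_alpha_clique_join_weight_row[where a = a and s = s and m = m and i = i, folded G_def w_def D_def]
  have w: "w j = (if j < s then D else if j < s + m then (1 - a) * D else (1 - a) * real s)" for j
    by (simp add: w_def D_def clique_join_weight_def)
  have "0 < D" using clique_weight_pos[of a s m] assms by (simp add: D_def)
  consider "i < s" | "s \<le> i" "i < s + m" | "s + m \<le> i" by linarith
  then show ?thesis
  proof cases
    case 1
    have "5 \<le> (1 - a) * real m + 3 * ((1 - a) * real s)"
      using large by (simp add: algebra_simps)
    then have "0 \<le> (1 - (1 - a)) * ((1 - a) * real m) * (real m + 2 * real s - 3 + (1 - a) * real s)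
        + real m * (2 * ((1 - a) * real s) - 2) + 4 * ((1 - a) * real s - 1) * (real s - 2) - 2"
      using assms by (intro clique_row_slack_nonneg) auto
    also have "\<dots> = (real m + 3 * real s - 3) * w i - (\<Sum>j<fst G. A_alpha a G $$ (i, j) * w j)"
      unfolding row(1)[OF 1] using 1 by (simp add: w D_def clique_weight_def algebra_simps)
    finally show ?thesis by simp
  next
    case 2
    have "a * real s \<le> real s" using a by (simp add: mult_left_le_one_le)
    then have "0 \<le> 2 * real s - 2 - a * real s" using \<open>2 \<le> s\<close> by linarith
    then have "0 \<le> ((1 - a) * D) * (2 * real s - 2 - a * real s)"
      using \<open>0 < D\<close> \<open>a < 1\<close> by simp
    also have "\<dots> = (real m + 3 * real s - 3) * w i - (\<Sum>j<fst G. A_alpha a G $$ (i, j) * w j)"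
      unfolding row(2)[OF 2] using 2 by (simp add: w D_def clique_weight_def algebra_simps)
    finally show ?thesis by simp
  next
    case 3
    then show ?thesis
      unfolding row(3)[OF 3 i] using 3 by (simp add: w D_def clique_weight_def algebra_simps)
  qed
qed

theorem mainTheorem4:
  fixes \<alpha> :: real and n s :: nat
  assumes "0 \<le> \<alpha>" and "\<alpha> < 1"
    and "real n \<ge> f_bound \<alpha>"
    and "2 \<le> s" and "real s \<le> (real n - 2) / 3"
  shows "rho_alpha \<alpha> (graph_join (complete_graph s)
           (graph_union (complete_graph (n - 3 * s)) (edgeless_graph (2 * s)))) < eta \<alpha> n"
proof -
  define m where "m = n - 3 * s"
  have "real (3 * s + 2) \<le> real n" using assms(5) by simp
  then have "3 * s + 2 \<le> n" by (simp only: of_nat_le_iff)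
  then have n: "real n = real m + 3 * real s" and "2 \<le> m" by (auto simp: m_def)
  let ?G = "clique_join_graph s m (2 * s)"
  have "5 \<le> (1 - \<alpha>) * f_bound \<alpha>" using assms(2) by (rule five_le_f_bound)
  also have "\<dots> \<le> (1 - \<alpha>) * (real m + 3 * real s)"
    using assms(2,3) n by (intro mult_left_mono) auto
  finally have large: "5 \<le> (1 - \<alpha>) * (real m + 3 * real s)" .
  have "rho_alpha \<alpha> ?G \<le> real m + 3 * real s - 3"
  proof (rule rho_alpha_le_of_row_bound)
    show "\<exists>k. eigenvalue (A_alpha \<alpha> ?G) k"
      using eigenvalue_A_alpha_clique_join_graph[of "2 * s"] assms(4) by auto
    show "0 < clique_join_weight \<alpha> s m i" for i
      using assms \<open>2 \<le> m\<close> by (intro clique_join_weight_pos) auto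
    show "(\<Sum>j<fst ?G. A_alpha \<alpha> ?G $$ (i, j) * clique_join_weight \<alpha> s m j)
        \<le> (real m + 3 * real s - 3) * clique_join_weight \<alpha> s m i" if "i < fst ?G" for i
      using that assms \<open>2 \<le> m\<close> large by (intro A_alpha_clique_join_row_bound) auto
  qed (use assms in auto)
  also have "\<dots> < eta \<alpha> n"
    using eta_gt_n_minus_3[of \<alpha> n] assms n by simp
  finally show ?thesis by (simp add: clique_join_graph_def m_def)
qed

end
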